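(* Let $k\ge 2$ and $n\ge 2$ be integers. Then the center of the $k$-Pell graph $\Pi_{n,k}$ is $$C(\Pi_{n,k})=\begin{cases}\Theta_n(k), & k\text{ even},\\ \Phi_n\!\left(\tfrac{k-1}{2},\tfrac{k+1}{2}\right), & k\text{ odd and } n\text{ even},\\ \Psi_n\!\left(\tfrac{k-1}{2},\tfrac{k+1}{2}\right), & k\text{ odd and } n\text{ odd}.\end{cases}$$ Further, $$|C(\Pi_{n,k})|=\begin{cases}F_{n+2}, & k\text{ even},\\ (n+4)\,2^{\frac{n}{2}-2}, & k\text{ odd and } n\text{ even},\\ 2^{\frac{n-1}{2}}, & k\text{ odd and } n\text{ odd}.\end{cases}$$ In addition, if $k$ is even, then the subgraph of $\Pi_{n,k}$ induced by $C(\Pi_{n,k})$ is isomorphic to the Fibonacci cube $\Gamma_n$.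
   Context: For an integer $k\ge 2$, a $k$-Pell string is a finite word over the alphabet $\{0,1,\ldots,k-1,kk\}$, i.e. a word over $\{0,1,\ldots,k\}$ in which every maximal run of the letter $k$ has even length. For $n\ge 0$, the $k$-Pell graph $\Pi_{n,k}$ has as vertices all $k$-Pell strings of length $n$, and two vertices are adjacent if one is obtained from the other either by replacing a single letter $i$ by $i+1$ (or vice versa) for some $i\in\{0,1,\ldots,k-2\}$, or by replacing one factor $(k-1)(k-1)$ by $kk$ (or vice versa), in such a way that the resulting string is again a $k$-Pell string. The center $C(G)$ of a graph is the set of vertices of minimum eccentricity. $F_m$ denotes the Fibonacci numbers ($F_0=0$, $F_1=1$, $F_m=F_{m-1}+F_{m-2}$). The Fibonacci cube $\Gamma_n$ is the graph whose vertices are binary strings of length $n$ with no two consecutive 1s, two being adjacent iff they differ in exactly one coordinate. For $k$ even, $\Theta_n(k)$ is the set of words $t_1\ldots t_n$ with every $t_i\in\{\frac k2-1,\frac k2\}$ and containing no two consecutive letters equal to $\frac k2-1$. For $n$ even and letters $a,b$, $\Phi_n(a,b)$ is the set of words of length $n$ that are concatenations of $n/2$ blocks from $\{aa,ab,ba\}$ (each block of length 2) such that no block $ba$ occurs before (to the left of) a block $ab$. For $n$ odd and letters $a,b$, $\Psi_n(a,b)$ is the set of words of length $n$ over $\{a,b\}$ that start and end with $a$, contain no factor $bb$, and in which every maximal run of $a$'s has odd length. Here $a=\frac{k-1}{2}$ and $b=\frac{k+1}{2}$ are regarded as letters (digits) of the alphabet $\{0,\ldots,k\}$. *)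

theory Defs
  imports Main "HOL-Number_Theory.Fib"
begin

text \<open>k-Pell strings: words over {0,...,k-1, kk}, i.e. words over {0..k}
  in which every maximal run of the letter k has even length.\<close>
fun pell_word :: "nat \<Rightarrow> nat list \<Rightarrow> bool" where
  "pell_word k [] = True"
| "pell_word k (x # xs) =
     (if x = k then (case xs of [] \<Rightarrow> False | y # ys \<Rightarrow> y = k \<and> pell_word k ys)
      else x < k \<and> pell_word k xs)"

definition pell_vertices :: "nat \<Rightarrow> nat \<Rightarrow> nat list set" where
  "pell_vertices n k = {w. length w = n \<and> pell_word k w}"

definition pell_step1 :: "nat \<Rightarrow> nat list \<Rightarrow> nat list \<Rightarrow> bool" where
  "pell_step1 k u v \<longleftrightarrow> length u = length v \<and>
     (\<exists>i < length u. (\<forall>j < length u. j \<noteq> i \<longrightarrow> u ! j = v ! j) \<and>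
        u ! i \<le> k - 2 \<and> v ! i = u ! i + 1)"

definition pell_step2 :: "nat \<Rightarrow> nat list \<Rightarrow> nat list \<Rightarrow> bool" where
  "pell_step2 k u v \<longleftrightarrow> (\<exists>p s. u = p @ [k - 1, k - 1] @ s \<and> v = p @ [k, k] @ s)"

definition pell_adj :: "nat \<Rightarrow> nat list \<Rightarrow> nat list \<Rightarrow> bool" where
  "pell_adj k u v \<longleftrightarrow> pell_word k u \<and> pell_word k v \<and>
     (pell_step1 k u v \<or> pell_step1 k v u \<or> pell_step2 k u v \<or> pell_step2 k v u)"

definition gdist :: "('a \<Rightarrow> 'a \<Rightarrow> bool) \<Rightarrow> 'a \<Rightarrow> 'a \<Rightarrow> nat" where
  "gdist E u v = (LEAST m. (E ^^ m) u v)"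

definition ecc :: "'a set \<Rightarrow> ('a \<Rightarrow> 'a \<Rightarrow> bool) \<Rightarrow> 'a \<Rightarrow> nat" where
  "ecc V E v = Max ((\<lambda>u. gdist E v u) ` V)"

definition center :: "'a set \<Rightarrow> ('a \<Rightarrow> 'a \<Rightarrow> bool) \<Rightarrow> 'a set" where
  "center V E = {v \<in> V. \<forall>u \<in> V. ecc V E v \<le> ecc V E u}"

definition pell_center :: "nat \<Rightarrow> nat \<Rightarrow> nat list set" where
  "pell_center n k = center (pell_vertices n k) (pell_adj k)"

definition Theta :: "nat \<Rightarrow> nat \<Rightarrow> nat list set" where
  "Theta n k = {w. length w = n \<and> set w \<subseteq> {k div 2 - 1, k div 2} \<and>
      (\<forall>i. Suc i < n \<longrightarrow> \<not> (w ! i = k div 2 - 1 \<and> w ! Suc i = k div 2 - 1))}"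

definition Phi :: "nat \<Rightarrow> nat \<Rightarrow> nat \<Rightarrow> nat list set" where
  "Phi n a b = {w. length w = n \<and> (\<exists>bs. length bs = n div 2 \<and>
      set bs \<subseteq> {[a, a], [a, b], [b, a]} \<and> w = concat bs \<and>
      (\<forall>i j. i < j \<and> j < length bs \<longrightarrow> \<not> (bs ! i = [b, a] \<and> bs ! j = [a, b])))}"

definition Psi :: "nat \<Rightarrow> nat \<Rightarrow> nat \<Rightarrow> nat list set" where
  "Psi n a b = {w. length w = n \<and> set w \<subseteq> {a, b} \<and> 0 < n \<and>
      w ! 0 = a \<and> w ! (n - 1) = a \<and>
      (\<forall>i. Suc i < n \<longrightarrow> \<not> (w ! i = b \<and> w ! Suc i = b)) \<and>
      (\<forall>i j. i \<le> j \<and> j < n \<and> (\<forall>l. i \<le> l \<and> l \<le> j \<longrightarrow> w ! l = a) \<and>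
             (i = 0 \<or> w ! (i - 1) \<noteq> a) \<and> (j = n - 1 \<or> w ! (j + 1) \<noteq> a)
             \<longrightarrow> odd (j - i + 1))}"

definition fib_cube_vertices :: "nat \<Rightarrow> nat list set" where
  "fib_cube_vertices n = {w. length w = n \<and> set w \<subseteq> {0, 1} \<and>
      (\<forall>i. Suc i < n \<longrightarrow> \<not> (w ! i = 1 \<and> w ! Suc i = 1))}"

definition fib_cube_adj :: "nat list \<Rightarrow> nat list \<Rightarrow> bool" where
  "fib_cube_adj u v \<longleftrightarrow> length u = length v \<and> card {i. i < length u \<and> u ! i \<noteq> v ! i} = 1"

definition graph_iso :: "'a set \<Rightarrow> ('a \<Rightarrow> 'a \<Rightarrow> bool) \<Rightarrow> 'b set \<Rightarrow> ('b \<Rightarrow> 'b \<Rightarrow> bool) \<Rightarrow> bool" where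
  "graph_iso V1 E1 V2 E2 \<longleftrightarrow> (\<exists>f. bij_betw f V1 V2 \<and>
      (\<forall>u \<in> V1. \<forall>v \<in> V1. E1 u v \<longleftrightarrow> E2 (f u) (f v)))"

end

theory Submission
  imports Defs
begin

text \<open>Give a letter i < k the weight 2i and the letter k the weight 2k - 1, and let D(u, v) be
  the l1-distance of the weight vectors. An edge changes D by at most 2, and from a word without the
  letter k every vertex can be reached in D/2 steps; hence d(u, v) = D(u, v)/2 whenever u avoids k.
  For a = (k - 1) div 2 and u a word over {a, a + 1} this gives ecc u \<le> n (k div 2) + excess u,
  where excess counts greedy factors aa and, for odd k, letters a + 1; the excess is at least
  (k mod 2) (n div 2). An explicit antipode shows that the bound is attained and that every vertex
  using another letter has eccentricity above the radius n (k div 2) + (k mod 2) (n div 2). So the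
  center consists of the words over {a, a + 1} of least excess: for even k the words avoiding aa,
  which are counted by F(n + 2) and span a copy of the Fibonacci cube; for odd k the words of excess
  n div 2, which a recursion on the first two letters identifies with Phi and Psi and counts.\<close>

lemma pell_word_induct [consumes 1, case_names Nil kk letter]:
  assumes "pell_word k w" and "P []"
    and "\<And>w. pell_word k w \<Longrightarrow> P w \<Longrightarrow> P (k # k # w)"
    and "\<And>x w. x < k \<Longrightarrow> pell_word k w \<Longrightarrow> P w \<Longrightarrow> P (x # w)"
  shows "P w"
  using assms(1)
proof (induction w rule: induct_list012)
  case (2 x)
  then show ?case using assms(2,4) by (simp split: if_splits)
next
  case (3 x y zs)
  then show ?case using assms(3,4) by (simp split: if_splits)
qed (rule assms(2))

lemma pell_word_append: "pell_word k p \<Longrightarrow> pell_word k q \<Longrightarrow> pell_word k (p @ q)"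
  by (induction k p rule: pell_word.induct) (auto split: list.splits if_splits)

lemma pell_word_letters_le: "pell_word k w \<Longrightarrow> set w \<subseteq> {..k}"
  by (induction k w rule: pell_word.induct) (auto split: list.splits if_splits)

lemma pell_word_if_letters_less: "set w \<subseteq> {..<k} \<Longrightarrow> pell_word k w"
  by (induction w) auto

lemma pell_step1_iff:
  "pell_step1 k u v \<longleftrightarrow> (\<exists>p s x. u = p @ [x] @ s \<and> v = p @ [Suc x] @ s \<and> x \<le> k - 2)"
proof
  assume "pell_step1 k u v"
  then obtain i where len: "length u = length v" and i: "i < length u"
    and eq: "\<forall>j < length u. j \<noteq> i \<longrightarrow> u ! j = v ! j" and x: "u ! i \<le> k - 2"
    and y: "v ! i = Suc (u ! i)"
    unfolding pell_step1_def by auto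
  have "take i v = take i u" "drop (Suc i) v = drop (Suc i) u"
    using eq i len by (auto intro: nth_equalityI)
  moreover have "v = take i v @ [v ! i] @ drop (Suc i) v"
    using i len by (simp add: id_take_nth_drop)
  ultimately have "v = take i u @ [Suc (u ! i)] @ drop (Suc i) u"
    using y by simp
  moreover have "u = take i u @ [u ! i] @ drop (Suc i) u"
    using i by (simp add: id_take_nth_drop)
  ultimately show "\<exists>p s x. u = p @ [x] @ s \<and> v = p @ [Suc x] @ s \<and> x \<le> k - 2"
    using x by blast
next
  assume "\<exists>p s x. u = p @ [x] @ s \<and> v = p @ [Suc x] @ s \<and> x \<le> k - 2"
  then obtain p s x where "u = p @ [x] @ s" "v = p @ [Suc x] @ s" "x \<le> k - 2" by blast
  then show "pell_step1 k u v"
    unfolding pell_step1_def by (intro conjI exI[of _ "length p"]) (auto simp: nth_append)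
qed

lemma pell_adj_sym: "pell_adj k u v \<Longrightarrow> pell_adj k v u"
  unfolding pell_adj_def by blast

lemma pell_adj_length: "pell_adj k u v \<Longrightarrow> length u = length v"
  unfolding pell_adj_def pell_step1_iff pell_step2_def by auto

lemma relpowp_pell_adj_length: "(pell_adj k ^^ m) u v \<Longrightarrow> length u = length v"
  by (induction m arbitrary: v) (auto elim!: relpowp_Suc_E dest: pell_adj_length)

lemma pell_adj_in_context:
  assumes "pell_adj k u v" "pell_word k p" "pell_word k s"
  shows "pell_adj k (p @ u @ s) (p @ v @ s)"
proof -
  have step1: "pell_step1 k (p @ u @ s) (p @ v @ s)" if "pell_step1 k u v" for u v
    using that unfolding pell_step1_iff by (metis append.assoc)
  have step2: "pell_step2 k (p @ u @ s) (p @ v @ s)" if "pell_step2 k u v" for u v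
    using that unfolding pell_step2_def by (metis append.assoc)
  have "pell_word k (p @ u @ s)" "pell_word k (p @ v @ s)"
    using assms pell_word_append unfolding pell_adj_def by auto
  then show ?thesis
    using assms(1) step1 step2 unfolding pell_adj_def by blast
qed

definition reachable_within :: "('a \<Rightarrow> 'a \<Rightarrow> bool) \<Rightarrow> nat \<Rightarrow> 'a \<Rightarrow> 'a \<Rightarrow> bool" where
  "reachable_within E m u v \<longleftrightarrow> (\<exists>m' \<le> m. (E ^^ m') u v)"

lemma reachable_within_refl: "reachable_within E 0 u u"
  unfolding reachable_within_def by auto

lemma reachable_within_edge: "E u v \<Longrightarrow> reachable_within E 1 u v"
  unfolding reachable_within_def by (intro exI[of _ 1]) auto

lemma reachable_within_trans:
  "reachable_within E m1 u w \<Longrightarrow> reachable_within E m2 w v \<Longrightarrow> reachable_within E (m1 + m2) u v"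
  unfolding reachable_within_def by (meson add_mono relpowp_trans)

lemma relpowp_sym:
  assumes "\<And>x y. E x y \<Longrightarrow> E y x"
  shows "(E ^^ m) u v \<Longrightarrow> (E ^^ m) v u"
proof (induction m arbitrary: v)
  case (Suc m)
  then obtain w where "(E ^^ m) u w" "E w v" by (auto elim: relpowp_Suc_E)
  with Suc.IH assms show ?case by (meson relpowp_Suc_I2)
qed simp

lemma reachable_within_sym:
  "(\<And>x y. E x y \<Longrightarrow> E y x) \<Longrightarrow> reachable_within E m u v \<Longrightarrow> reachable_within E m v u"
  unfolding reachable_within_def by (meson relpowp_sym)

lemma relpowp_map:
  assumes "\<And>x y. E x y \<Longrightarrow> E (f x) (f y)"
  shows "(E ^^ m) u v \<Longrightarrow> (E ^^ m) (f u) (f v)"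
proof (induction m arbitrary: v)
  case (Suc m)
  then obtain w where "(E ^^ m) u w" "E w v" by (auto elim: relpowp_Suc_E)
  with Suc.IH assms show ?case by (meson relpowp_Suc_I)
qed simp

lemma reachable_within_map:
  "(\<And>x y. E x y \<Longrightarrow> E (f x) (f y)) \<Longrightarrow> reachable_within E m u v
    \<Longrightarrow> reachable_within E m (f u) (f v)"
  unfolding reachable_within_def by (meson relpowp_map)

lemma gdist_le: "reachable_within E m u v \<Longrightarrow> gdist E u v \<le> m"
  unfolding reachable_within_def gdist_def by (meson Least_le order_trans)

lemma relpowp_gdist: "reachable_within E m u v \<Longrightarrow> (E ^^ gdist E u v) u v"
  unfolding reachable_within_def gdist_def by (meson LeastI)

lemma ecc_le:
  "finite V \<Longrightarrow> u \<in> V \<Longrightarrow> (\<And>v. v \<in> V \<Longrightarrow> gdist E u v \<le> R) \<Longrightarrow> ecc V E u \<le> R"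
  unfolding ecc_def by (subst Max_le_iff) auto

lemma gdist_le_ecc: "finite V \<Longrightarrow> v \<in> V \<Longrightarrow> gdist E u v \<le> ecc V E u"
  unfolding ecc_def by (intro Max_ge) auto

lemma center_eqI:
  assumes "C \<subseteq> V" "C \<noteq> {}"
    and "\<And>c. c \<in> C \<Longrightarrow> ecc V E c \<le> R"
    and "\<And>v. v \<in> V \<Longrightarrow> R \<le> ecc V E v"
    and "\<And>v. v \<in> V - C \<Longrightarrow> R < ecc V E v"
  shows "center V E = C"
proof
  show "center V E \<subseteq> C"
  proof
    fix v assume v: "v \<in> center V E"
    obtain c where "c \<in> C" using assms(2) by blast
    with v assms(1,3) have "ecc V E v \<le> R" unfolding center_def by force
    with v assms(5) show "v \<in> C" unfolding center_def by force
  qed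
  show "C \<subseteq> center V E"
    unfolding center_def using assms(1,3,4) by (auto intro: order_trans)
qed

lemma graph_iso_cong:
  "(\<And>u v. u \<in> V \<Longrightarrow> v \<in> V \<Longrightarrow> E u v \<longleftrightarrow> E' u v) \<Longrightarrow> graph_iso V E W F \<longleftrightarrow> graph_iso V E' W F"
  unfolding graph_iso_def by simp

section \<open>A weight bound for Pell distances\<close>

text \<open>The weight 2k - 1 of the letter k makes the exchange (k-1)(k-1) to kk cost 2, like a
  single-letter step.\<close>

definition letter_weight :: "nat \<Rightarrow> nat \<Rightarrow> int" where
  "letter_weight k x = (if x = k then 2 * int k - 1 else 2 * int x)"

fun weight_dist :: "nat \<Rightarrow> nat list \<Rightarrow> nat list \<Rightarrow> int" where
  "weight_dist k (x # xs) (y # ys) = \<bar>letter_weight k x - letter_weight k y\<bar> + weight_dist k xs ys"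
| "weight_dist k _ _ = 0"

lemma weight_dist_self [simp]: "weight_dist k u u = 0"
  by (induction u) auto

lemma weight_dist_commute: "weight_dist k u v = weight_dist k v u"
  by (induction k u v rule: weight_dist.induct) (auto simp: abs_minus_commute)

lemma weight_dist_append:
  "length p = length p' \<Longrightarrow> weight_dist k (p @ q) (p' @ q') = weight_dist k p p' + weight_dist k q q'"
  by (induction p p' rule: list_induct2) auto

lemma weight_dist_triangle:
  "length u = length w \<Longrightarrow> length w = length v \<Longrightarrow> weight_dist k u v \<le> weight_dist k u w + weight_dist k w v"
proof (induction u w arbitrary: v rule: list_induct2)
  case (Cons x xs y ys)
  then obtain z zs where "v = z # zs" by (cases v) auto
  with Cons.IH[of zs] Cons.prems Cons.hyps show ?case by auto
qed simp

lemma weight_dist_adj: "k \<ge> 2 \<Longrightarrow> pell_adj k u v \<Longrightarrow> weight_dist k u v \<le> 2"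
proof -
  assume k: "k \<ge> 2"
  have step1: "weight_dist k u v \<le> 2" if "pell_step1 k u v" for u v
    using that k unfolding pell_step1_iff by (auto simp: weight_dist_append letter_weight_def)
  have step2: "weight_dist k u v \<le> 2" if "pell_step2 k u v" for u v
    using that k unfolding pell_step2_def by (auto simp: weight_dist_append letter_weight_def)
  assume "pell_adj k u v"
  then show ?thesis
    using step1 step2 weight_dist_commute unfolding pell_adj_def by metis
qed

lemma weight_dist_le_walk:
  "k \<ge> 2 \<Longrightarrow> (pell_adj k ^^ m) u v \<Longrightarrow> weight_dist k u v \<le> 2 * int m"
proof (induction m arbitrary: v)
  case (Suc m)
  then obtain w where w: "(pell_adj k ^^ m) u w" "pell_adj k w v" by (auto elim: relpowp_Suc_E)
  have "weight_dist k u v \<le> weight_dist k u w + weight_dist k w v"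
    using relpowp_pell_adj_length[OF w(1)] pell_adj_length[OF w(2)] by (rule weight_dist_triangle)
  with Suc w weight_dist_adj show ?case by fastforce
qed simp

abbreviation pell_within :: "nat \<Rightarrow> nat \<Rightarrow> nat list \<Rightarrow> nat list \<Rightarrow> bool" where
  "pell_within k \<equiv> reachable_within (pell_adj k)"

lemma pell_within_sym: "pell_within k m u v \<Longrightarrow> pell_within k m v u"
  by (rule reachable_within_sym[OF pell_adj_sym])

lemma pell_within_in_context:
  "pell_within k m u v \<Longrightarrow> pell_word k p \<Longrightarrow> pell_word k s \<Longrightarrow> pell_within k m (p @ u @ s) (p @ v @ s)"
  by (rule reachable_within_map[where f = "\<lambda>w. p @ w @ s"]) (auto intro: pell_adj_in_context)

lemma pell_within_letter_up: "x \<le> y \<Longrightarrow> y < k \<Longrightarrow> pell_within k (y - x) [x] [y]"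
proof (induction y)
  case (Suc y)
  show ?case
  proof (cases "x = Suc y")
    case False
    with Suc.prems have "x \<le> y" "Suc y < k" by auto
    have "pell_step1 k [y] [Suc y]"
      using \<open>Suc y < k\<close> unfolding pell_step1_iff by (intro exI[of _ "[]"]) auto
    then have "pell_within k 1 [y] [Suc y]"
      using \<open>Suc y < k\<close> by (intro reachable_within_edge) (simp add: pell_adj_def)
    moreover have "pell_within k (y - x) [x] [y]"
      using Suc.IH \<open>x \<le> y\<close> \<open>Suc y < k\<close> by simp
    ultimately have "pell_within k (y - x + 1) [x] [Suc y]"
      by (simp only: reachable_within_trans)
    with \<open>x \<le> y\<close> show ?thesis by (simp add: Suc_diff_le)
  qed (simp add: reachable_within_refl)
qed (simp add: reachable_within_refl)

lemma pell_within_letter: "x < k \<Longrightarrow> y < k \<Longrightarrow> pell_within k (nat \<bar>int x - int y\<bar>) [x] [y]"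
proof (cases "x \<le> y")
  case False
  have eq: "nat \<bar>int x - int y\<bar> = x - y" using False by simp
  assume "x < k"
  then show ?thesis
    unfolding eq using False pell_within_letter_up[of y x k] pell_within_sym by simp
next
  case True
  have eq: "nat \<bar>int x - int y\<bar> = y - x" using True by simp
  assume "y < k"
  then show ?thesis
    unfolding eq using True pell_within_letter_up by simp
qed

lemma pell_within_pair_kk:
  assumes "x < k" "y < k"
  shows "pell_within k ((k - 1 - x) + (k - 1 - y) + 1) [x, y] [k, k]"
proof -
  have "pell_step2 k [k - 1, k - 1] [k, k]"
    unfolding pell_step2_def by (intro exI[of _ "[]"]) simp
  then have kk: "pell_within k 1 [k - 1, k - 1] [k, k]"
    using assms by (intro reachable_within_edge) (simp add: pell_adj_def)
  have "pell_within k (k - 1 - x) [x] [k - 1]" "pell_within k (k - 1 - y) [y] [k - 1]"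
    using assms pell_within_letter_up[of x "k - 1" k] pell_within_letter_up[of y "k - 1" k] by auto
  then have "pell_within k (k - 1 - x) [x, y] [k - 1, y]"
    and "pell_within k (k - 1 - y) [k - 1, y] [k - 1, k - 1]"
    using pell_within_in_context[of k "k - 1 - x" "[x]" "[k - 1]" "[]" "[y]"]
      pell_within_in_context[of k "k - 1 - y" "[y]" "[k - 1]" "[k - 1]" "[]"] assms by simp_all
  with kk show ?thesis by (blast intro: reachable_within_trans)
qed

lemma pell_within_Cons:
  assumes "pell_within k m u v" "x < k" "y < k" "set u \<subseteq> {..<k}"
  shows "pell_within k (nat \<bar>int y - int x\<bar> + m) (y # u) (x # v)"
proof -
  have "pell_within k (nat \<bar>int y - int x\<bar>) (y # u) (x # u)"
    using pell_within_in_context[OF pell_within_letter[OF assms(3,2)] _ pell_word_if_letters_less[OF assms(4)],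
        of "[]"] by simp
  moreover have "pell_within k m (x # u) (x # v)"
    using pell_within_in_context[OF assms(1), of "[x]" "[]"] assms(2) by simp
  ultimately show ?thesis by (rule reachable_within_trans)
qed

lemma pell_within_Cons_Cons_kk:
  assumes "pell_within k m u v" "x < k" "y < k" "set u \<subseteq> {..<k}"
  shows "pell_within k ((k - 1 - x) + (k - 1 - y) + 1 + m) (x # y # u) (k # k # v)"
proof -
  have "pell_within k ((k - 1 - x) + (k - 1 - y) + 1) (x # y # u) (k # k # u)"
    using pell_within_in_context[OF pell_within_pair_kk[OF assms(2,3)] _ pell_word_if_letters_less[OF assms(4)],
        of "[]"] by simp
  moreover have "pell_within k m (k # k # u) (k # k # v)"
    using pell_within_in_context[OF assms(1), of "[k, k]" "[]"] by simp
  ultimately show ?thesis by (rule reachable_within_trans)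
qed

lemma pell_within_weight_dist:
  "pell_word k v \<Longrightarrow> length u = length v \<Longrightarrow> set u \<subseteq> {..<k}
    \<Longrightarrow> \<exists>m. pell_within k m u v \<and> 2 * int m \<le> weight_dist k u v"
proof (induction v arbitrary: u rule: pell_word_induct)
  case Nil
  then show ?case by (auto intro: reachable_within_refl)
next
  case (kk v)
  then obtain y1 y2 us where u: "u = y1 # y2 # us" "y1 < k" "y2 < k" "set us \<subseteq> {..<k}"
    by (cases u; cases "tl u") auto
  obtain m where m: "pell_within k m us v" "2 * int m \<le> weight_dist k us v"
    using kk.IH kk.prems u by auto
  have "2 * int ((k - 1 - y1) + (k - 1 - y2) + 1 + m) \<le> weight_dist k u (k # k # v)"
    using u m(2) by (simp add: letter_weight_def of_nat_diff)
  then show ?case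
    using pell_within_Cons_Cons_kk[OF m(1) u(2-4)] u(1) by blast
next
  case (letter x v)
  then obtain y us where u: "u = y # us" "y < k" "set us \<subseteq> {..<k}" by (cases u) auto
  obtain m where m: "pell_within k m us v" "2 * int m \<le> weight_dist k us v"
    using letter.IH letter.prems u by auto
  have "\<bar>letter_weight k y - letter_weight k x\<bar> = 2 * \<bar>int y - int x\<bar>"
    using u letter.hyps(1) by (auto simp: letter_weight_def abs_if)
  then have "2 * int (nat \<bar>int y - int x\<bar> + m) \<le> weight_dist k u (x # v)"
    using u m(2) by simp
  then show ?case
    using pell_within_Cons[OF m(1) letter.hyps(1) u(2,3)] u(1) by blast
qed

lemma pell_vertices_finite: "finite (pell_vertices n k)"
proof (rule finite_subset)
  show "pell_vertices n k \<subseteq> {w. set w \<subseteq> {..k} \<and> length w = n}"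
    unfolding pell_vertices_def using pell_word_letters_le by blast
qed (simp add: finite_lists_length_eq)

lemma pell_connected:
  assumes "k \<ge> 2" "u \<in> pell_vertices n k" "v \<in> pell_vertices n k"
  obtains m where "pell_within k m u v"
proof -
  have zero: "set (replicate n 0) \<subseteq> {..<k}" using assms(1) by auto
  have "pell_word k u" "length (replicate n 0) = length u"
    and "pell_word k v" "length (replicate n 0) = length v"
    using assms(2,3) by (simp_all add: pell_vertices_def)
  then obtain m1 m2 where "pell_within k m1 (replicate n 0) u" "pell_within k m2 (replicate n 0) v"
    using pell_within_weight_dist zero by meson
  then show ?thesis
    using that reachable_within_trans[OF pell_within_sym] by blast
qed

lemma weight_dist_le_gdist:
  assumes "k \<ge> 2" "u \<in> pell_vertices n k" "v \<in> pell_vertices n k"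
  shows "weight_dist k u v \<le> 2 * int (gdist (pell_adj k) u v)"
proof -
  obtain m where "pell_within k m u v" using pell_connected[OF assms] .
  then show ?thesis by (rule weight_dist_le_walk[OF assms(1) relpowp_gdist])
qed

lemma gdist_le_weight_dist:
  assumes "pell_word k v" "length u = length v" "set u \<subseteq> {..<k}"
  shows "2 * int (gdist (pell_adj k) u v) \<le> weight_dist k u v"
proof -
  obtain m where "pell_within k m u v" "2 * int m \<le> weight_dist k u v"
    using pell_within_weight_dist[OF assms] by blast
  then show ?thesis using gdist_le[of "pell_adj k" m u v] by linarith
qed

section \<open>The center\<close>

text \<open>For u over {a, a + 1} with a = (k - 1) div 2, excess a (k mod 2) u is the amount by which
  ecc u exceeds n (k div 2): a greedy factor aa costs 1 (the antipode puts kk there) and each other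
  letter a + 1 costs k mod 2.\<close>

fun excess :: "nat \<Rightarrow> nat \<Rightarrow> nat list \<Rightarrow> nat" where
  "excess a \<beta> (x # y # ys) =
     (if x = a \<and> y = a then 1 + excess a \<beta> ys else (if x = Suc a then \<beta> else 0) + excess a \<beta> (y # ys))"
| "excess a \<beta> [x] = (if x = Suc a then \<beta> else 0)"
| "excess a \<beta> [] = 0"

lemma excess_Suc_Cons: "excess a \<beta> (Suc a # w) = \<beta> + excess a \<beta> w"
  by (cases w) auto

lemma excess_Cons_central: "excess a \<beta> w \<le> excess a \<beta> (a # w) \<and> excess a \<beta> (a # w) \<le> 1 + excess a \<beta> w"
  by (induction w) auto

lemma excess_Cons_ge: "(if x = Suc a then \<beta> else 0) + excess a \<beta> w \<le> excess a \<beta> (x # w)"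
  using excess_Cons_central[of a \<beta> w] by (cases w) (auto simp: excess_Suc_Cons)

lemma excess_Cons_Cons_ge: "(if x = a \<and> y = a then 1 else 0) + excess a \<beta> ys \<le> excess a \<beta> (x # y # ys)"
  using excess_Cons_ge[of y a \<beta> ys] excess_Cons_ge[of x a \<beta> "y # ys"] by (auto split: if_splits)

lemma excess_ge:
  assumes "\<beta> \<le> 1" "set w \<subseteq> {a, Suc a}"
  shows "\<beta> * (length w div 2) \<le> excess a \<beta> w"
  using assms(2)
proof (induction w rule: induct_list012)
  case (3 x y zs)
  then show ?case
    using assms(1) excess_Cons_central[of a \<beta> zs] by (auto simp: excess_Suc_Cons algebra_simps)
qed auto

lemma excess_replicate_central: "excess a \<beta> (replicate n a) = n div 2"
  by (induction n rule: nat_induct2) auto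

lemma excess_replicate_Suc: "excess a \<beta> (replicate n (Suc a)) = \<beta> * n"
  by (induction n) (auto simp: excess_Suc_Cons)

lemma excess_zero_iff: "excess a 0 u = 0 \<longleftrightarrow> successively (\<lambda>x y. \<not> (x = a \<and> y = a)) u"
  by (induction a "0::nat" u rule: excess.induct) auto

locale pell_alphabet =
  fixes k :: nat
  assumes k_ge_2: "2 \<le> k"
begin

definition a :: nat where "a = (k - 1) div 2"

lemma a_cases:
  "(k = 2 * a + 2 \<and> k div 2 = Suc a \<and> k mod 2 = 0) \<or> (k = 2 * a + 1 \<and> k div 2 = a \<and> k mod 2 = 1 \<and> 3 \<le> k)"
  using k_ge_2 unfolding a_def by presburger

lemma Suc_a_less: "Suc a < k"
  using a_cases by auto

definition far_letter :: "nat \<Rightarrow> nat" where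
  "far_letter x = (if x \<le> a then k - 1 else 0)"

fun antipode :: "nat list \<Rightarrow> nat list" where
  "antipode (x # y # ys) = (if x \<le> a \<and> y \<le> a then k # k # antipode ys else far_letter x # antipode (y # ys))"
| "antipode [x] = [far_letter x]"
| "antipode [] = []"

definition nearest_central :: "nat \<Rightarrow> nat" where
  "nearest_central x = (if x \<le> a then a else Suc a)"

lemma antipode_in_pell_vertices: "antipode u \<in> pell_vertices (length u) k"
proof -
  have "length (antipode u) = length u \<and> pell_word k (antipode u)"
    using k_ge_2 by (induction u rule: antipode.induct) (auto simp: far_letter_def)
  then show ?thesis unfolding pell_vertices_def by simp
qed

lemma far_letter_weight:
  assumes "x \<le> k"
  shows "2 * int (k div 2) + 2 * int (if a < x then k mod 2 else 0) + (if x \<in> {a, Suc a} then 0 else 1)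
    \<le> \<bar>letter_weight k x - letter_weight k (far_letter x)\<bar>"
  using assms a_cases unfolding letter_weight_def far_letter_def by auto

lemma pair_weight_kk:
  assumes "x \<le> a" "y \<le> a"
  shows "4 * int (k div 2) + 2 + (if x = a \<and> y = a then 0 else 1)
    \<le> \<bar>letter_weight k x - letter_weight k k\<bar> + \<bar>letter_weight k y - letter_weight k k\<bar>"
  using assms a_cases unfolding letter_weight_def by auto

lemma central_letter_weight:
  assumes "x \<in> {a, Suc a}" "y < k"
  shows "\<bar>letter_weight k x - letter_weight k y\<bar> \<le> 2 * int (k div 2) + 2 * int (if x = Suc a then k mod 2 else 0)"
  using assms a_cases unfolding letter_weight_def by auto

lemma central_pair_weight_kk:
  assumes "x \<in> {a, Suc a}" "y \<in> {a, Suc a}"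
  shows "\<bar>letter_weight k x - letter_weight k k\<bar> + \<bar>letter_weight k y - letter_weight k k\<bar>
    \<le> 4 * int (k div 2) + 2 * int (if x = a \<and> y = a then 1 else 0)"
  using assms a_cases unfolding letter_weight_def by auto

lemma weight_dist_antipode_ge:
  "set u \<subseteq> {..k} \<Longrightarrow>
    2 * int (length u * (k div 2) + excess a (k mod 2) (map nearest_central u))
      + (if set u \<subseteq> {a, Suc a} then 0 else 1)
    \<le> weight_dist k u (antipode u)"
proof (induction u rule: antipode.induct)
  case (1 x y ys)
  show ?case
  proof (cases "x \<le> a \<and> y \<le> a")
    case True
    then have "excess a (k mod 2) (map nearest_central (x # y # ys))
        = 1 + excess a (k mod 2) (map nearest_central ys)"
      by (simp add: nearest_central_def)
    moreover have "(if set (x # y # ys) \<subseteq> {a, Suc a} then 0 else 1)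
        \<le> (if x = a \<and> y = a then 0 else 1) + (if set ys \<subseteq> {a, Suc a} then 0 else (1::int))"
      using True by auto
    moreover have "weight_dist k (x # y # ys) (antipode (x # y # ys)) = weight_dist k ys (antipode ys)
        + \<bar>letter_weight k x - letter_weight k k\<bar> + \<bar>letter_weight k y - letter_weight k k\<bar>"
      using True by simp
    ultimately show ?thesis
      using "1.IH"(1)[OF True] "1.prems" pair_weight_kk[of x y] True by (simp add: algebra_simps)
  next
    case False
    then have "excess a (k mod 2) (map nearest_central (x # y # ys))
        = (if a < x then k mod 2 else 0) + excess a (k mod 2) (map nearest_central (y # ys))"
      by (auto simp: nearest_central_def)
    moreover have "(if set (x # y # ys) \<subseteq> {a, Suc a} then 0 else 1)
        \<le> (if x \<in> {a, Suc a} then 0 else 1) + (if set (y # ys) \<subseteq> {a, Suc a} then 0 else (1::int))"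
      by auto
    moreover have "antipode (x # y # ys) = far_letter x # antipode (y # ys)"
      using False by (simp only: antipode.simps if_False)
    ultimately show ?thesis
      using "1.IH"(2)[OF False] "1.prems" far_letter_weight[of x] by (simp add: algebra_simps)
  qed
next
  case (2 x)
  then show ?case
    using far_letter_weight[of x] by (auto simp: nearest_central_def)
qed simp

lemma weight_dist_le_excess:
  "pell_word k v \<Longrightarrow> length u = length v \<Longrightarrow> set u \<subseteq> {a, Suc a} \<Longrightarrow>
    weight_dist k u v \<le> 2 * int (length u * (k div 2) + excess a (k mod 2) u)"
proof (induction v arbitrary: u rule: pell_word_induct)
  case (kk v)
  then obtain y1 y2 us where u: "u = y1 # y2 # us" "y1 \<in> {a, Suc a}" "y2 \<in> {a, Suc a}"
    "set us \<subseteq> {a, Suc a}"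
    by (cases u; cases "tl u") auto
  have "weight_dist k us v \<le> 2 * int (length us * (k div 2) + excess a (k mod 2) us)"
    using kk.IH kk.prems u by simp
  then show ?case
    using u central_pair_weight_kk[OF u(2,3)] excess_Cons_Cons_ge[of y1 a y2 "k mod 2" us]
    by (simp add: algebra_simps)
next
  case (letter x v)
  then obtain y us where u: "u = y # us" "y \<in> {a, Suc a}" "set us \<subseteq> {a, Suc a}" by (cases u) auto
  have "weight_dist k us v \<le> 2 * int (length us * (k div 2) + excess a (k mod 2) us)"
    using letter.IH letter.prems u by simp
  then show ?case
    using u central_letter_weight[OF u(2) letter.hyps(1)] excess_Cons_ge[of y a "k mod 2" us]
    by (simp add: algebra_simps)
qed simp

definition radius :: "nat \<Rightarrow> nat" where
  "radius n = n * (k div 2) + k mod 2 * (n div 2)"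

definition center_words :: "nat \<Rightarrow> nat list set" where
  "center_words n =
     {u. length u = n \<and> set u \<subseteq> {a, Suc a} \<and> excess a (k mod 2) u \<le> k mod 2 * (n div 2)}"

lemma center_words_subset: "center_words n \<subseteq> pell_vertices n k"
  using Suc_a_less pell_word_if_letters_less[of _ k]
  unfolding center_words_def pell_vertices_def by force

lemma center_words_nonempty: "center_words n \<noteq> {}"
proof (cases "k mod 2 = 0")
  case True
  then have "replicate n (Suc a) \<in> center_words n"
    by (auto simp: center_words_def excess_replicate_Suc set_replicate_conv_if)
  then show ?thesis by blast
next
  case False
  then have "replicate n a \<in> center_words n"
    by (auto simp: center_words_def excess_replicate_central set_replicate_conv_if)
  then show ?thesis by blast
qed

lemma ecc_le_radius:
  assumes u: "u \<in> center_words n"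
  shows "ecc (pell_vertices n k) (pell_adj k) u \<le> radius n"
proof (rule ecc_le[OF pell_vertices_finite])
  show "u \<in> pell_vertices n k" using u center_words_subset by blast
next
  fix v assume "v \<in> pell_vertices n k"
  then have v: "pell_word k v" "length u = length v"
    using u unfolding pell_vertices_def center_words_def by auto
  have "set u \<subseteq> {a, Suc a}" using u unfolding center_words_def by simp
  then have "2 * int (gdist (pell_adj k) u v) \<le> weight_dist k u v"
    using gdist_le_weight_dist[OF v] Suc_a_less by fastforce
  also have "\<dots> \<le> 2 * int (n * (k div 2) + excess a (k mod 2) u)"
    using weight_dist_le_excess[OF v] u unfolding center_words_def by simp
  also have "\<dots> \<le> 2 * int (radius n)"
    using u unfolding center_words_def radius_def by (simp only: mult_le_cancel_left of_nat_le_iff) simp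
  finally show "gdist (pell_adj k) u v \<le> radius n" by simp
qed

lemma weight_dist_antipode_le_ecc:
  assumes "u \<in> pell_vertices n k"
  shows "weight_dist k u (antipode u) \<le> 2 * int (ecc (pell_vertices n k) (pell_adj k) u)"
proof -
  have antipode: "antipode u \<in> pell_vertices n k"
    using assms antipode_in_pell_vertices unfolding pell_vertices_def by auto
  have "weight_dist k u (antipode u) \<le> 2 * int (gdist (pell_adj k) u (antipode u))"
    using weight_dist_le_gdist[OF k_ge_2 assms antipode] .
  also have "\<dots> \<le> 2 * int (ecc (pell_vertices n k) (pell_adj k) u)"
    using gdist_le_ecc[OF pell_vertices_finite antipode] by simp
  finally show ?thesis .
qed

lemma radius_le_weight_dist_antipode:
  assumes "u \<in> pell_vertices n k"
  shows "2 * int (radius n) + (if u \<in> center_words n then 0 else 1) \<le> weight_dist k u (antipode u)"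
proof -
  define N where "N = n * (k div 2) + excess a (k mod 2) (map nearest_central u)"
  have u: "length u = n" "set u \<subseteq> {..k}"
    using assms pell_word_letters_le unfolding pell_vertices_def by auto
  have "set (map nearest_central u) \<subseteq> {a, Suc a}"
    by (auto simp: nearest_central_def)
  then have "radius n \<le> N"
    using excess_ge[of "k mod 2" "map nearest_central u" a] u(1) unfolding radius_def N_def by simp
  moreover have "radius n < N" if "u \<notin> center_words n" "set u \<subseteq> {a, Suc a}"
  proof -
    have "map nearest_central u = u"
      using that(2) by (induction u) (auto simp: nearest_central_def)
    then show ?thesis using that u(1) unfolding center_words_def radius_def N_def by auto
  qed
  moreover have "2 * int N + (if set u \<subseteq> {a, Suc a} then 0 else 1) \<le> weight_dist k u (antipode u)"
    using weight_dist_antipode_ge[OF u(2)] u(1) unfolding N_def by simp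
  ultimately show ?thesis by (auto split: if_splits)
qed

theorem pell_center_eq_center_words: "pell_center n k = center_words n"
  unfolding pell_center_def
proof (rule center_eqI[where R = "radius n"])
  have bound: "2 * int (radius n) + (if v \<in> center_words n then 0 else 1)
      \<le> 2 * int (ecc (pell_vertices n k) (pell_adj k) v)" if "v \<in> pell_vertices n k" for v
    using radius_le_weight_dist_antipode[OF that] weight_dist_antipode_le_ecc[OF that] by linarith
  show "radius n \<le> ecc (pell_vertices n k) (pell_adj k) v" if "v \<in> pell_vertices n k" for v
    using bound[OF that] by (auto split: if_splits)
  show "radius n < ecc (pell_vertices n k) (pell_adj k) v" if "v \<in> pell_vertices n k - center_words n" for v
    using bound[of v] that by auto
qed (use center_words_subset center_words_nonempty ecc_le_radius in auto)

end

section \<open>Even k: Fibonacci words\<close>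

lemma card_image_Un_disjoint:
  assumes "finite A" "finite B" "inj f" "inj g" "f ` A \<inter> g ` B = {}"
  shows "card (f ` A \<union> g ` B) = card A + card B"
  using assms by (simp add: card_Un_disjoint card_image inj_on_subset)

lemma successively_iff_nth:
  "successively P xs \<longleftrightarrow> (\<forall>i. Suc i < length xs \<longrightarrow> P (xs ! i) (xs ! Suc i))"
proof (induction xs rule: induct_list012)
  case (3 x y zs)
  then show ?case
    by (auto simp: less_Suc_eq_0_disj)
qed auto

definition fib_words :: "nat \<Rightarrow> 'a \<Rightarrow> 'a \<Rightarrow> 'a list set" where
  "fib_words n a b = {w. length w = n \<and> set w \<subseteq> {a, b} \<and> successively (\<lambda>x y. \<not> (x = a \<and> y = a)) w}"

lemma fib_words_finite: "finite (fib_words n a b)"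
proof (rule finite_subset)
  show "fib_words n a b \<subseteq> {w. set w \<subseteq> {a, b} \<and> length w = n}"
    unfolding fib_words_def by auto
qed (simp add: finite_lists_length_eq)

lemma fib_words_Suc_Suc:
  assumes "a \<noteq> b"
  shows "fib_words (Suc (Suc n)) a b = Cons b ` fib_words (Suc n) a b \<union> (\<lambda>w. a # b # w) ` fib_words n a b"
proof (intro equalityI subsetI)
  fix u assume "u \<in> fib_words (Suc (Suc n)) a b"
  then obtain x y w where "u = x # y # w" "x \<in> {a, b}" "y \<in> {a, b}" "length w = n" "set w \<subseteq> {a, b}"
    "\<not> (x = a \<and> y = a)" "successively (\<lambda>x y. \<not> (x = a \<and> y = a)) (y # w)"
    unfolding fib_words_def by (auto simp: length_Suc_conv)
  then show "u \<in> Cons b ` fib_words (Suc n) a b \<union> (\<lambda>w. a # b # w) ` fib_words n a b"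
    unfolding fib_words_def by (auto simp: successively_Cons)
qed (use assms in \<open>auto simp: fib_words_def successively_Cons\<close>)

lemma card_fib_words: "a \<noteq> b \<Longrightarrow> card (fib_words n a b) = fib (n + 2)"
proof (induction n rule: fib.induct)
  case 1
  have "fib_words 0 a b = {[]}" unfolding fib_words_def by auto
  then show ?case by simp
next
  case 2
  have "fib_words (Suc 0) a b = {[a], [b]}" unfolding fib_words_def by (auto simp: length_Suc_conv)
  with 2 show ?case by (simp add: numeral_3_eq_3)
next
  case (3 n)
  have "card (fib_words (Suc (Suc n)) a b) = card (fib_words (Suc n) a b) + card (fib_words n a b)"
    unfolding fib_words_Suc_Suc[OF "3.prems"] using "3.prems"
    by (intro card_image_Un_disjoint) (auto simp: fib_words_finite inj_def)
  with 3 show ?case by (simp add: fib_plus_2)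
qed

lemma fib_cube_adj_map:
  assumes "inj_on f (set u \<union> set v)"
  shows "fib_cube_adj (map f u) (map f v) \<longleftrightarrow> fib_cube_adj u v"
proof (cases "length u = length v")
  case True
  have "f (u ! i) = f (v ! i) \<longleftrightarrow> u ! i = v ! i" if "i < length u" for i
    using inj_onD[OF assms, of "u ! i" "v ! i"] that True by auto
  then have "{i. i < length u \<and> map f u ! i \<noteq> map f v ! i} = {i. i < length u \<and> u ! i \<noteq> v ! i}"
    using True by auto
  then show ?thesis
    unfolding fib_cube_adj_def using True by simp
qed (simp add: fib_cube_adj_def)

lemma graph_iso_fib_words:
  assumes "a \<noteq> b" "a' \<noteq> b'"
  shows "graph_iso (fib_words n a b) fib_cube_adj (fib_words n a' b') fib_cube_adj"
proof -
  define f where "f x = (if x = a then a' else b')" for x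
  define g where "g y = (if y = a' then a else b)" for y
  have "bij_betw (map f) (fib_words n a b) (fib_words n a' b')"
  proof (rule bij_betw_byWitness[where f' = "map g"])
    show "\<forall>u \<in> fib_words n a b. map g (map f u) = u"
      using assms unfolding fib_words_def f_def g_def by (auto intro!: map_idI)
    show "\<forall>v \<in> fib_words n a' b'. map f (map g v) = v"
      using assms unfolding fib_words_def f_def g_def by (auto intro!: map_idI)
    show "map f ` fib_words n a b \<subseteq> fib_words n a' b'"
      using assms unfolding fib_words_def f_def by (auto simp: successively_map elim!: successively_mono)
    show "map g ` fib_words n a' b' \<subseteq> fib_words n a b"
      using assms unfolding fib_words_def g_def by (auto simp: successively_map elim!: successively_mono)
  qed
  moreover have "inj_on f (set u \<union> set v)" if "u \<in> fib_words n a b" "v \<in> fib_words n a b" for u v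
    using that assms unfolding fib_words_def f_def inj_on_def by auto
  ultimately show ?thesis
    unfolding graph_iso_def using fib_cube_adj_map by blast
qed

lemma fib_cube_adj_commute: "fib_cube_adj u v \<longleftrightarrow> fib_cube_adj v u"
proof (cases "length u = length v")
  case True
  then have "{i. i < length u \<and> u ! i \<noteq> v ! i} = {i. i < length v \<and> v ! i \<noteq> u ! i}"
    by auto
  then show ?thesis unfolding fib_cube_adj_def using True by simp
qed (auto simp: fib_cube_adj_def)

lemma fib_cube_adj_if_pell_step1: "pell_step1 k u v \<Longrightarrow> fib_cube_adj u v"
proof -
  assume "pell_step1 k u v"
  then obtain i where "length u = length v" "i < length u"
    "\<forall>j < length u. j \<noteq> i \<longrightarrow> u ! j = v ! j" "v ! i = u ! i + 1"
    unfolding pell_step1_def by blast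
  then have "{j. j < length u \<and> u ! j \<noteq> v ! j} = {i}"
    by auto
  with \<open>length u = length v\<close> show ?thesis
    unfolding fib_cube_adj_def by simp
qed

lemma pell_step1_if_fib_cube_adj:
  assumes "Suc a < k" "set u \<subseteq> {a, Suc a}" "set v \<subseteq> {a, Suc a}" "fib_cube_adj u v"
  shows "pell_step1 k u v \<or> pell_step1 k v u"
proof -
  obtain i where len: "length u = length v" and "{j. j < length u \<and> u ! j \<noteq> v ! j} = {i}"
    using assms(4) by (auto simp: fib_cube_adj_def card_1_singleton_iff)
  then have i: "i < length u" "u ! i \<noteq> v ! i" "\<forall>j < length u. j \<noteq> i \<longrightarrow> u ! j = v ! j"
    by (auto simp: set_eq_iff)
  have "u ! i \<in> set u" "v ! i \<in> set v"
    using i(1) len by simp_all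
  then have "u ! i \<in> {a, Suc a}" "v ! i \<in> {a, Suc a}"
    using assms(2,3) by blast+
  then consider "u ! i = a" "v ! i = Suc a" | "v ! i = a" "u ! i = Suc a"
    using i(2) by auto
  then show ?thesis
  proof cases
    case 1
    then have "pell_step1 k u v"
      unfolding pell_step1_def using i len assms(1) by (intro conjI exI[of _ i]) auto
    then show ?thesis ..
  next
    case 2
    then have "pell_step1 k v u"
      unfolding pell_step1_def using i len assms(1) by (intro conjI exI[of _ i]) auto
    then show ?thesis ..
  qed
qed

lemma pell_adj_iff_fib_cube_adj:
  assumes "Suc a < k" "set u \<subseteq> {a, Suc a}" "set v \<subseteq> {a, Suc a}"
  shows "pell_adj k u v \<longleftrightarrow> fib_cube_adj u v"
proof -
  have "pell_word k u" "pell_word k v"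
    using assms by (auto intro!: pell_word_if_letters_less)
  moreover have "\<not> pell_step2 k u v" "\<not> pell_step2 k v u"
    using assms unfolding pell_step2_def by auto
  moreover have "pell_step1 k u v \<or> pell_step1 k v u \<longleftrightarrow> fib_cube_adj u v"
  proof
    assume "pell_step1 k u v \<or> pell_step1 k v u"
    then show "fib_cube_adj u v"
      using fib_cube_adj_if_pell_step1 fib_cube_adj_commute by metis
  qed (rule pell_step1_if_fib_cube_adj[OF assms])
  ultimately show ?thesis
    unfolding pell_adj_def by blast
qed

lemma Theta_eq_fib_words: "Theta n k = fib_words n (k div 2 - 1) (k div 2)"
  unfolding Theta_def fib_words_def successively_iff_nth by auto

lemma fib_cube_vertices_eq_fib_words: "fib_cube_vertices n = fib_words n 1 0"
  unfolding fib_cube_vertices_def fib_words_def successively_iff_nth by auto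

context pell_alphabet
begin

lemma center_words_even: "even k \<Longrightarrow> center_words n = Theta n k"
  unfolding Theta_eq_fib_words center_words_def fib_words_def
  using a_cases excess_zero_iff[of a] by auto

lemma graph_iso_center_words_even:
  assumes "even k"
  shows "graph_iso (center_words n) (pell_adj k) (fib_cube_vertices n) fib_cube_adj"
proof -
  have "center_words n = fib_words n a (Suc a)"
    using center_words_even[OF assms] a_cases assms by (simp add: Theta_eq_fib_words)
  moreover have "graph_iso (fib_words n a (Suc a)) (pell_adj k) (fib_cube_vertices n) fib_cube_adj
      \<longleftrightarrow> graph_iso (fib_words n a (Suc a)) fib_cube_adj (fib_cube_vertices n) fib_cube_adj"
    by (rule graph_iso_cong) (auto simp: fib_words_def intro!: pell_adj_iff_fib_cube_adj[OF Suc_a_less])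
  moreover have "graph_iso (fib_words n a (Suc a)) fib_cube_adj (fib_cube_vertices n) fib_cube_adj"
    unfolding fib_cube_vertices_eq_fib_words by (rule graph_iso_fib_words) simp_all
  ultimately show ?thesis by simp
qed

end

section \<open>Odd k: words of least excess\<close>

definition min_excess_words :: "nat \<Rightarrow> nat \<Rightarrow> nat list set" where
  "min_excess_words a n = {u. length u = n \<and> set u \<subseteq> {a, Suc a} \<and> excess a 1 u \<le> n div 2}"

lemma min_excess_words_finite: "finite (min_excess_words a n)"
proof (rule finite_subset)
  show "min_excess_words a n \<subseteq> {u. set u \<subseteq> {a, Suc a} \<and> length u = n}"
    unfolding min_excess_words_def by auto
qed (simp add: finite_lists_length_eq)

lemma min_excess_words_0: "min_excess_words a 0 = {[]}"
  unfolding min_excess_words_def by auto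

lemma min_excess_words_1: "min_excess_words a (Suc 0) = {[a]}"
  unfolding min_excess_words_def by (auto simp: length_Suc_conv)

lemma Cons_Cons_in_min_excess_words:
  "x # y # w \<in> min_excess_words a (Suc (Suc n)) \<longleftrightarrow>
     (x = a \<and> y \<in> {a, Suc a} \<and> w \<in> min_excess_words a n)
     \<or> (x = Suc a \<and> even n \<and> y # w \<in> min_excess_words a (Suc n))"
proof (cases "x = Suc a")
  case True
  have "excess a 1 (x # y # w) = 1 + excess a 1 (y # w)"
    using True excess_Suc_Cons by simp
  moreover have "Suc n div 2 \<le> excess a 1 (y # w)" if "set (y # w) \<subseteq> {a, Suc a}" "length w = n"
    using excess_ge[of 1 "y # w" a] that by simp
  ultimately show ?thesis
    unfolding min_excess_words_def by auto presburger+
qed (auto simp: min_excess_words_def excess_Suc_Cons)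

lemma min_excess_words_Suc_Suc:
  "min_excess_words a (Suc (Suc n)) =
     (\<lambda>w. a # a # w) ` min_excess_words a n \<union> (\<lambda>w. a # Suc a # w) ` min_excess_words a n
     \<union> (if even n then Cons (Suc a) ` min_excess_words a (Suc n) else {})"
proof (intro equalityI subsetI)
  fix u assume "u \<in> min_excess_words a (Suc (Suc n))"
  moreover from this obtain x y w where "u = x # y # w"
    unfolding min_excess_words_def by (auto simp: length_Suc_conv)
  ultimately show "u \<in> (\<lambda>w. a # a # w) ` min_excess_words a n \<union> (\<lambda>w. a # Suc a # w) ` min_excess_words a n
     \<union> (if even n then Cons (Suc a) ` min_excess_words a (Suc n) else {})"
    using Cons_Cons_in_min_excess_words by auto
next
  fix u assume "u \<in> (\<lambda>w. a # a # w) ` min_excess_words a n \<union> (\<lambda>w. a # Suc a # w) ` min_excess_words a n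
     \<union> (if even n then Cons (Suc a) ` min_excess_words a (Suc n) else {})"
  moreover have "v \<noteq> []" if "v \<in> min_excess_words a (Suc n)" for v
    using that unfolding min_excess_words_def by auto
  ultimately show "u \<in> min_excess_words a (Suc (Suc n))"
    using Cons_Cons_in_min_excess_words by (auto split: if_splits) (metis list.exhaust)
qed

lemma card_min_excess_words_odd: "card (min_excess_words a (2 * m + 1)) = 2 ^ m"
proof (induction m)
  case (Suc m)
  have "card (min_excess_words a (2 * Suc m + 1))
      = card (min_excess_words a (2 * m + 1)) + card (min_excess_words a (2 * m + 1))"
    using min_excess_words_Suc_Suc[of a "2 * m + 1"]
    by (simp, intro card_image_Un_disjoint) (auto simp: min_excess_words_finite inj_def)
  with Suc show ?case by simp
qed (simp add: min_excess_words_1)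

lemma card_min_excess_words_even: "2 * card (min_excess_words a (2 * m)) = (m + 2) * 2 ^ m"
proof (induction m)
  case (Suc m)
  let ?M = "min_excess_words a (2 * m)"
  have "card ((\<lambda>w. a # a # w) ` ?M \<union> (\<lambda>w. a # Suc a # w) ` ?M) = 2 * card ?M"
    by (subst card_image_Un_disjoint) (auto simp: min_excess_words_finite inj_def)
  moreover have "min_excess_words a (2 * Suc m) =
      ((\<lambda>w. a # a # w) ` ?M \<union> (\<lambda>w. a # Suc a # w) ` ?M) \<union> Cons (Suc a) ` min_excess_words a (2 * m + 1)"
    using min_excess_words_Suc_Suc[of a "2 * m"] by simp
  ultimately have "card (min_excess_words a (2 * Suc m)) = 2 * card ?M + card (min_excess_words a (2 * m + 1))"
    by (simp only:, subst card_Un_disjoint) (auto simp: min_excess_words_finite card_image)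
  with Suc card_min_excess_words_odd[of a m] show ?case
    by (simp add: algebra_simps)
qed (simp add: min_excess_words_0)

definition letter_at_even :: "'a \<Rightarrow> 'a list \<Rightarrow> bool" where
  "letter_at_even a u \<longleftrightarrow> (\<forall>i < length u. even i \<longrightarrow> u ! i = a)"

definition letter_at_odd :: "'a \<Rightarrow> 'a list \<Rightarrow> bool" where
  "letter_at_odd a u \<longleftrightarrow> (\<forall>i < length u. odd i \<longrightarrow> u ! i = a)"

lemma letter_at_even_Cons: "letter_at_even a (x # w) \<longleftrightarrow> x = a \<and> letter_at_odd a w"
  unfolding letter_at_even_def letter_at_odd_def by (simp add: All_less_Suc2)

lemma letter_at_odd_Cons: "letter_at_odd a (x # w) \<longleftrightarrow> letter_at_even a w"
  unfolding letter_at_even_def letter_at_odd_def by (simp add: All_less_Suc2)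

lemma in_min_excess_words_odd:
  "u \<in> min_excess_words a (2 * m + 1) \<longleftrightarrow>
     length u = 2 * m + 1 \<and> set u \<subseteq> {a, Suc a} \<and> letter_at_even a u"
proof (induction m arbitrary: u)
  case 0
  then show ?case
    by (auto simp: min_excess_words_1 length_Suc_conv letter_at_even_Cons letter_at_odd_def)
next
  case (Suc m)
  show ?case
  proof (cases "length u = 2 * Suc m + 1")
    case True
    then obtain x y w where "u = x # y # w" by (cases u; cases "tl u") auto
    with True Suc.IH[of w] show ?thesis
      using Cons_Cons_in_min_excess_words[of x y w a "2 * m + 1"]
      by (auto simp: letter_at_even_Cons letter_at_odd_Cons)
  qed (auto simp: min_excess_words_def)
qed

lemma concat_Cons_Cons_blocks:
  assumes "\<forall>c \<in> B. length c = 2"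
  shows "(\<exists>bs. length bs = Suc m \<and> set bs \<subseteq> B \<and> x # y # w = concat bs \<and> P bs) \<longleftrightarrow>
    (\<exists>bs. length bs = m \<and> [x, y] \<in> B \<and> set bs \<subseteq> B \<and> w = concat bs \<and> P ([x, y] # bs))"
proof
  assume "\<exists>bs. length bs = Suc m \<and> set bs \<subseteq> B \<and> x # y # w = concat bs \<and> P bs"
  then obtain c bs where "length bs = m" "c \<in> B" "set bs \<subseteq> B" "x # y # w = c @ concat bs" "P (c # bs)"
    by (auto simp: length_Suc_conv)
  moreover from this assms obtain p q where "c = [p, q]"
    by (metis (no_types) length_0_conv length_Suc_conv numeral_2_eq_2)
  ultimately show "\<exists>bs. length bs = m \<and> [x, y] \<in> B \<and> set bs \<subseteq> B \<and> w = concat bs \<and> P ([x, y] # bs)"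
    by auto
next
  assume "\<exists>bs. length bs = m \<and> [x, y] \<in> B \<and> set bs \<subseteq> B \<and> w = concat bs \<and> P ([x, y] # bs)"
  then obtain bs where "length bs = m" "[x, y] \<in> B" "set bs \<subseteq> B" "w = concat bs" "P ([x, y] # bs)"
    by blast
  then show "\<exists>bs. length bs = Suc m \<and> set bs \<subseteq> B \<and> x # y # w = concat bs \<and> P bs"
    by (intro exI[of _ "[x, y] # bs"]) auto
qed

lemma length_concat_blocks: "(\<And>c. c \<in> set bs \<Longrightarrow> length c = 2) \<Longrightarrow> length (concat bs) = 2 * length bs"
  by (induction bs) auto

lemma letter_at_odd_iff_blocks:
  "length w = 2 * m \<and> set w \<subseteq> {a, Suc a} \<and> letter_at_odd a w \<longleftrightarrow>
     (\<exists>bs. length bs = m \<and> set bs \<subseteq> {[a, a], [Suc a, a]} \<and> w = concat bs)"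
proof (induction m arbitrary: w)
  case 0
  then show ?case by (auto simp: letter_at_odd_def)
next
  case (Suc m)
  show ?case
  proof (cases "length w = 2 * Suc m")
    case True
    then obtain x y w' where "w = x # y # w'" by (cases w; cases "tl w") auto
    with True Suc.IH[of w'] show ?thesis
      using concat_Cons_Cons_blocks[of "{[a, a], [Suc a, a]}" m x y w' "\<lambda>_. True"]
      by (auto simp: letter_at_even_Cons letter_at_odd_Cons)
  qed (use length_concat_blocks in force)
qed

lemma Cons_in_min_excess_words_odd_iff_blocks:
  "length w = 2 * m \<Longrightarrow> y # w \<in> min_excess_words a (2 * m + 1) \<longleftrightarrow>
     y = a \<and> (\<exists>bs. length bs = m \<and> set bs \<subseteq> {[a, a], [Suc a, a]} \<and> w = concat bs)"
  using in_min_excess_words_odd[of "y # w" a m] letter_at_odd_iff_blocks[of w m a]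
  by (auto simp: letter_at_even_Cons)

lemma min_excess_words_even_iff_blocks:
  fixes a :: nat
  defines "B \<equiv> {[a, a], [a, Suc a], [Suc a, a]}"
    and "R \<equiv> \<lambda>c d. \<not> (c = [Suc a, a] \<and> d = [a, Suc a])"
  shows "length w = 2 * m \<Longrightarrow>
    w \<in> min_excess_words a (2 * m) \<longleftrightarrow>
      (\<exists>bs. length bs = m \<and> set bs \<subseteq> B \<and> w = concat bs \<and> sorted_wrt R bs)"
proof (induction m arbitrary: w)
  case 0
  then show ?case by (simp add: min_excess_words_0)
next
  case (Suc m)
  then obtain x y w' where w: "w = x # y # w'" and w': "length w' = 2 * m"
    by (cases w; cases "tl w") auto
  have blocks: "(\<exists>bs. length bs = Suc m \<and> set bs \<subseteq> B \<and> w = concat bs \<and> sorted_wrt R bs) \<longleftrightarrow>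
      [x, y] \<in> B \<and> (\<exists>bs. length bs = m \<and> set bs \<subseteq> B \<and> w' = concat bs \<and> sorted_wrt R bs
        \<and> (\<forall>d \<in> set bs. R [x, y] d))"
    unfolding w by (subst concat_Cons_Cons_blocks) (auto simp: B_def)
  consider "x = a" | "x = Suc a" | "x \<notin> {a, Suc a}" by blast
  then show ?case
  proof cases
    case 1
    then show ?thesis
      unfolding blocks using Suc.IH[OF w'] Cons_Cons_in_min_excess_words[of x y w' a "2 * m"]
      by (simp add: w B_def R_def)
  next
    case 2
    have "w \<in> min_excess_words a (2 * Suc m) \<longleftrightarrow>
        y = a \<and> (\<exists>bs. length bs = m \<and> set bs \<subseteq> {[a, a], [Suc a, a]} \<and> w' = concat bs)"
      using 2 w Cons_Cons_in_min_excess_words[of x y w' a "2 * m"]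
        Cons_in_min_excess_words_odd_iff_blocks[OF w'] by simp
    also have "\<dots> \<longleftrightarrow> (\<exists>bs. length bs = Suc m \<and> set bs \<subseteq> B \<and> w = concat bs \<and> sorted_wrt R bs)"
    proof -
      have "set bs \<subseteq> B \<and> sorted_wrt R bs \<and> (\<forall>d \<in> set bs. R [Suc a, a] d)
          \<longleftrightarrow> set bs \<subseteq> {[a, a], [Suc a, a]}" for bs
        by (auto simp: B_def R_def sorted_wrt_iff_nth_less dest: nth_mem)
      moreover have "[Suc a, y] \<in> B \<longleftrightarrow> y = a" by (auto simp: B_def)
      ultimately show ?thesis
        unfolding blocks using 2 by blast
    qed
    finally show ?thesis .
  next
    case 3
    then show ?thesis
      unfolding blocks using Cons_Cons_in_min_excess_words[of x y w' a "2 * m"]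
      by (auto simp: w B_def)
  qed
qed

lemma Phi_eq_min_excess_words:
  assumes "even n"
  shows "Phi n a (Suc a) = min_excess_words a n"
proof (intro set_eqI)
  fix w
  show "w \<in> Phi n a (Suc a) \<longleftrightarrow> w \<in> min_excess_words a n"
  proof (cases "length w = n")
    case True
    then have "length w = 2 * (n div 2)" using assms by simp
    from min_excess_words_even_iff_blocks[OF this] show ?thesis
      using True assms unfolding Phi_def sorted_wrt_iff_nth_less by auto
  qed (simp add: Phi_def min_excess_words_def)
qed

lemma maximal_run_start:
  fixes f :: "nat \<Rightarrow> 'a"
  assumes "P (f j)"
  shows "\<exists>i \<le> j. (\<forall>l. i \<le> l \<and> l \<le> j \<longrightarrow> P (f l)) \<and> (i = 0 \<or> \<not> P (f (i - 1)))"
  using assms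
proof (induction j)
  case (Suc j)
  show ?case
  proof (cases "P (f j)")
    case True
    with Suc.IH obtain i where "i \<le> j" "\<forall>l. i \<le> l \<and> l \<le> j \<longrightarrow> P (f l)" "i = 0 \<or> \<not> P (f (i - 1))"
      by blast
    with Suc.prems show ?thesis by (intro exI[of _ i]) (auto simp: le_Suc_eq)
  next
    case False
    with Suc.prems show ?thesis by (intro exI[of _ "Suc j"]) auto
  qed
qed auto

lemma in_Psi_if_letter_at_even:
  assumes "odd n" "length u = n" "set u \<subseteq> {a, b}" "a \<noteq> b" "letter_at_even a u"
  shows "u \<in> Psi n a b"
proof -
  have even_a: "u ! i = a" if "i < n" "even i" for i
    using assms(2,5) that unfolding letter_at_even_def by blast
  have "odd (j - i + 1)"
    if "i \<le> j" "j < n" "\<forall>l. i \<le> l \<and> l \<le> j \<longrightarrow> u ! l = a"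
      "i = 0 \<or> u ! (i - 1) \<noteq> a" "j = n - 1 \<or> u ! (j + 1) \<noteq> a" for i j
  proof -
    have "even i"
    proof (cases "i = 0")
      case False
      with that(1,2,4) have "i - 1 < n" "u ! (i - 1) \<noteq> a" by auto
      with False even_a[of "i - 1"] show ?thesis by auto
    qed simp
    moreover have "even j"
    proof (cases "j = n - 1")
      case False
      with that(2,5) have "j + 1 < n" "u ! (j + 1) \<noteq> a" by auto
      with even_a[of "j + 1"] show ?thesis by auto
    qed (use assms(1) that(2) in auto)
    ultimately show ?thesis using that(1) by simp
  qed
  moreover have "\<not> (u ! i = b \<and> u ! Suc i = b)" if "Suc i < n" for i
    using that even_a[of i] even_a[of "Suc i"] assms(4) by (cases "even i") auto
  ultimately show ?thesis
    unfolding Psi_def using assms even_a[of 0] even_a[of "n - 1"] by (auto simp: odd_pos)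
qed

lemma letter_at_even_if_in_Psi:
  assumes "u \<in> Psi n a b" "a \<noteq> b"
  shows "letter_at_even a u"
proof -
  from assms(1) have n: "length u = n" "0 < n" and u0: "u ! 0 = a" and letters: "set u \<subseteq> {a, b}"
    and no_bb: "\<And>i. Suc i < n \<Longrightarrow> \<not> (u ! i = b \<and> u ! Suc i = b)"
    and runs: "\<And>i j. i \<le> j \<Longrightarrow> j < n \<Longrightarrow> \<forall>l. i \<le> l \<and> l \<le> j \<longrightarrow> u ! l = a \<Longrightarrow>
      i = 0 \<or> u ! (i - 1) \<noteq> a \<Longrightarrow> j = n - 1 \<or> u ! (j + 1) \<noteq> a \<Longrightarrow> odd (j - i + 1)"
    unfolding Psi_def by blast+
  have letter: "u ! i = a \<or> u ! i = b" if "i < n" for i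
  proof -
    have "u ! i \<in> set u" using that n by simp
    then show ?thesis using letters by blast
  qed
  have "u ! p = a" if "p < n" "even p" for p
    using that
  proof (induction p rule: less_induct)
    case (less p)
    show ?case
    proof (rule ccontr)
      assume "u ! p \<noteq> a"
      moreover have "p \<noteq> 0" using u0 \<open>u ! p \<noteq> a\<close> by metis
      ultimately have "u ! (p - 1) = a"
        using letter[of p] letter[of "p - 1"] no_bb[of "p - 1"] less.prems(1) by auto
      then obtain i where i: "i \<le> p - 1" "\<forall>l. i \<le> l \<and> l \<le> p - 1 \<longrightarrow> u ! l = a"
        "i = 0 \<or> u ! (i - 1) \<noteq> a"
        using maximal_run_start[of "\<lambda>x. x = a" "(!) u" "p - 1"] by auto
      have "even i"
      proof (cases "i = 0")
        case False
        with i(1,3) \<open>p \<noteq> 0\<close> have "i - 1 < p" "u ! (i - 1) \<noteq> a" by auto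
        with less.IH[of "i - 1"] less.prems(1) have "odd (i - 1)" by auto
        with False show ?thesis by (cases i) auto
      qed simp
      moreover have "odd (p - 1 - i + 1)"
        using runs[OF i(1) _ i(2,3)] less.prems(1) \<open>p \<noteq> 0\<close> \<open>u ! p \<noteq> a\<close> by simp
      ultimately show False
        using less.prems(2) i(1) \<open>p \<noteq> 0\<close> by simp
    qed
  qed
  with n show ?thesis unfolding letter_at_even_def by blast
qed

lemma Psi_eq_min_excess_words:
  assumes "odd n"
  shows "Psi n a (Suc a) = min_excess_words a n"
proof -
  obtain m where m: "n = 2 * m + 1" using assms oddE by blast
  show ?thesis
  proof (intro set_eqI iffI)
    fix u assume "u \<in> Psi n a (Suc a)"
    moreover from this have "length u = n" "set u \<subseteq> {a, Suc a}"
      unfolding Psi_def by blast+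
    ultimately show "u \<in> min_excess_words a n"
      using letter_at_even_if_in_Psi in_min_excess_words_odd m by simp
  next
    fix u assume "u \<in> min_excess_words a n"
    then show "u \<in> Psi n a (Suc a)"
      using in_Psi_if_letter_at_even[OF assms] in_min_excess_words_odd m by simp
  qed
qed

context pell_alphabet
begin

lemma center_words_odd: "odd k \<Longrightarrow> center_words n = min_excess_words a n"
  unfolding center_words_def min_excess_words_def by (simp add: odd_iff_mod_2_eq_one)

lemma odd_central_letters: "odd k \<Longrightarrow> (k - 1) div 2 = a \<and> (k + 1) div 2 = Suc a"
  using a_cases by auto

end

lemma real_eq_powi_if_double_eq: "2 * c = (m + 2) * 2 ^ m \<Longrightarrow> real c = real (2 * m + 4) * 2 powi (int m - 2)"
proof -
  assume "2 * c = (m + 2) * 2 ^ m"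
  then have "2 * real c = (real m + 2) * 2 ^ m"
    by (metis of_nat_add of_nat_mult of_nat_numeral of_nat_power)
  moreover have "(2::real) powi (int m - 2) = 2 ^ m / 4"
    by (simp add: power_int_diff power_int_of_nat)
  ultimately show ?thesis by (simp only:) (simp add: field_simps)
qed

theorem theorem4p2:
  fixes n k :: nat
  assumes "k \<ge> 2" and "n \<ge> 2"
  shows "(even k \<longrightarrow> pell_center n k = Theta n k) \<and>
         (odd k \<and> even n \<longrightarrow> pell_center n k = Phi n ((k - 1) div 2) ((k + 1) div 2)) \<and>
         (odd k \<and> odd n \<longrightarrow> pell_center n k = Psi n ((k - 1) div 2) ((k + 1) div 2)) \<and>
         (even k \<longrightarrow> card (pell_center n k) = fib (n + 2)) \<and>
         (odd k \<and> even n \<longrightarrow>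
            real (card (pell_center n k)) = real (n + 4) * (2::real) powi (int (n div 2) - 2)) \<and>
         (odd k \<and> odd n \<longrightarrow> card (pell_center n k) = 2 ^ ((n - 1) div 2)) \<and>
         (even k \<longrightarrow> graph_iso (pell_center n k) (pell_adj k) (fib_cube_vertices n) fib_cube_adj)"
proof -
  interpret pell_alphabet k using assms(1) by unfold_locales
  have center: "pell_center n k = center_words n" by (rule pell_center_eq_center_words)
  have even_k: "pell_center n k = Theta n k \<and> card (pell_center n k) = fib (n + 2)
      \<and> graph_iso (pell_center n k) (pell_adj k) (fib_cube_vertices n) fib_cube_adj" if "even k"
    using that center center_words_even graph_iso_center_words_even
      card_fib_words[of "k div 2 - 1" "k div 2"] assms(1)
    by (simp add: Theta_eq_fib_words)
  have odd_k_even_n: "pell_center n k = Phi n ((k - 1) div 2) ((k + 1) div 2)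
      \<and> real (card (pell_center n k)) = real (n + 4) * (2::real) powi (int (n div 2) - 2)"
    if "odd k" "even n"
  proof -
    obtain m where "n = 2 * m" using \<open>even n\<close> by blast
    then show ?thesis
      using that center center_words_odd odd_central_letters Phi_eq_min_excess_words
        card_min_excess_words_even[of a m] real_eq_powi_if_double_eq by simp
  qed
  have odd_k_odd_n: "pell_center n k = Psi n ((k - 1) div 2) ((k + 1) div 2)
      \<and> card (pell_center n k) = 2 ^ ((n - 1) div 2)" if "odd k" "odd n"
  proof -
    obtain m where "n = 2 * m + 1" using \<open>odd n\<close> oddE by blast
    then show ?thesis
      using that center center_words_odd odd_central_letters Psi_eq_min_excess_words
        card_min_excess_words_odd[of a m] by simp
  qed
  show ?thesis using even_k odd_k_even_n odd_k_odd_n by blast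
qed

end
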